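(* Let $\sigma\in S_n$, let $X$ be a metric space, let $A,B\subseteq X$ be disjoint nonempty closed subsets, and let $\lambda_1,\dots,\lambda_n:X\to\mathbb{C}$ be continuous. Then there exists a continuous map $v:X\to\mathcal{U}(\mathrm{M}_n)$ (a unitary in $\mathrm{M}_n(\mathrm{C}(X))$) such that (i) $v(x)=1_n$ for all $x\in A$; (ii) $v(x)=U[\sigma]$ for all $x\in B$; and (iii) $v(x)$ commutes with $\mathrm{diag}(\lambda_1(x),\dots,\lambda_n(x))$ whenever $\lambda_i(x)=\lambda_{\sigma(i)}(x)$ for every $i\in\{1,\dots,n\}$.
   Context: $\mathcal{U}(\mathrm{M}_n)$ is the unitary group of $\mathrm{M}_n$. For $\pi\in S_n$, $U[\pi]$ denotes the permutation matrix obtained from the identity matrix of $\mathrm{M}_n$ by moving the $i$-th row to the $\pi(i)$-th row, for each $i$. *)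

theory Defs
  imports "HOL-Analysis.Analysis" "HOL-Combinatorics.Permutations"
begin

definition ctrans :: "complex ^ 'n ^ 'n \<Rightarrow> complex ^ 'n ^ 'n" where
  "ctrans U = (\<chi> i j. cnj (U $ j $ i))"

text \<open>Unitary matrices in M_n (indices of finite type 'n, n = CARD('n)).\<close>
definition unitary_mat :: "complex ^ 'n ^ 'n \<Rightarrow> bool" where
  "unitary_mat U \<longleftrightarrow> U ** ctrans U = mat 1 \<and> ctrans U ** U = mat 1"

text \<open>U[pi]: the identity with its i-th row moved to the pi(i)-th row,
  i.e. row pi(i) of U[pi] is e_i.\<close>
definition perm_mat :: "('n \<Rightarrow> 'n) \<Rightarrow> complex ^ 'n ^ 'n" where
  "perm_mat p = (\<chi> r c. if r = p c then 1 else 0)"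

definition diag_mat :: "('n \<Rightarrow> complex) \<Rightarrow> complex ^ 'n ^ 'n" where
  "diag_mat d = (\<chi> i j. if i = j then d i else 0)"

end

theory Submission
  imports Defs "HOL-Combinatorics.Cycles"
begin

text \<open>Let m be the order of \<sigma>, \<omega> = exp(2\<pi>i/m) and P = U[\<sigma>]. As P is unitary with P^m = 1,
  it equals \<Sum>_k \<omega>^k E_k for the spectral projections E_k = (1/m) \<Sum>_j \<omega>^(-jk) P^j (k < m), which are
  pairwise orthogonal and sum to 1. Hence P^t = \<Sum>_k exp(2\<pi>itk/m) E_k is a continuous path of unitaries
  from P^0 = 1 to P^1 = P. Each E_k is a polynomial in P, so P^t commutes with every matrix commuting with
  P, e.g. with diag(\<lambda>(x)) when \<lambda>_\<sigma>(i)(x) = \<lambda>_i(x) for all i. Take v(x) = P^f(x) for an Urysohn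
  function f that is 0 on A and 1 on B.\<close>

text \<open>HOL-Analysis scales matrices only by reals, so complex scalars are introduced here.\<close>

definition mat_scale :: "complex \<Rightarrow> complex ^ 'n ^ 'm \<Rightarrow> complex ^ 'n ^ 'm"  (infixr \<open>*\<^sub>m\<close> 75)
  where "c *\<^sub>m A = (\<chi> i j. c * A $ i $ j)"

lemma mat_scale_one [simp]: "1 *\<^sub>m A = A"
  by (simp add: mat_scale_def vec_eq_iff)

lemma mat_scale_zero [simp]: "0 *\<^sub>m A = 0"
  by (simp add: mat_scale_def vec_eq_iff)

lemma mat_scale_zero_right [simp]: "c *\<^sub>m 0 = 0"
  by (simp add: mat_scale_def vec_eq_iff)

lemma mat_scale_scale [simp]: "a *\<^sub>m b *\<^sub>m A = (a * b) *\<^sub>m A"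
  by (simp add: mat_scale_def vec_eq_iff mult.assoc)

lemma mat_scale_sum_right: "c *\<^sub>m (\<Sum>k\<in>S. f k) = (\<Sum>k\<in>S. c *\<^sub>m f k)"
  by (simp add: mat_scale_def vec_eq_iff sum_distrib_left)

lemma mat_scale_sum_left: "(\<Sum>k\<in>S. f k) *\<^sub>m A = (\<Sum>k\<in>S. f k *\<^sub>m A)"
  by (simp add: mat_scale_def vec_eq_iff sum_distrib_right)

lemma mat_scale_mult_left [simp]: "(c *\<^sub>m A) ** B = c *\<^sub>m (A ** B)"
  by (simp add: mat_scale_def matrix_matrix_mult_def vec_eq_iff sum_distrib_left mult.assoc)

lemma mat_scale_mult_right [simp]: "A ** (c *\<^sub>m B) = c *\<^sub>m (A ** B)"
  by (simp add: mat_scale_def matrix_matrix_mult_def vec_eq_iff sum_distrib_left mult.left_commute)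

lemma mat_scale_fixed_eq_0:
  assumes "c *\<^sub>m A = A" and "c \<noteq> 1"
  shows "A = 0"
  using assms by (auto simp: mat_scale_def vec_eq_iff)

lemma continuous_on_mat_scale [continuous_intros]:
  "continuous_on S f \<Longrightarrow> continuous_on S (\<lambda>x. f x *\<^sub>m A)"
  unfolding mat_scale_def by (intro continuous_on_vec_lambda continuous_intros)

lemma matrix_mult_sum_left: "(\<Sum>k\<in>S. f k) ** B = (\<Sum>k\<in>S. f k ** B)"
  by (simp add: matrix_matrix_mult_def vec_eq_iff sum_distrib_right sum.swap[of _ S])

lemma matrix_mult_sum_right: "A ** (\<Sum>k\<in>S. f k) = (\<Sum>k\<in>S. A ** f k)"
  by (simp add: matrix_matrix_mult_def vec_eq_iff sum_distrib_left sum.swap[of _ S])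

lemma ctrans_mult: "ctrans (A ** B) = ctrans B ** ctrans A"
  by (simp add: ctrans_def matrix_matrix_mult_def vec_eq_iff mult.commute)

lemma ctrans_sum: "ctrans (\<Sum>k\<in>S. f k) = (\<Sum>k\<in>S. ctrans (f k))"
  by (simp add: ctrans_def vec_eq_iff)

lemma ctrans_mat_scale: "ctrans (c *\<^sub>m A) = cnj c *\<^sub>m ctrans A"
  by (simp add: ctrans_def mat_scale_def vec_eq_iff)

lemma ctrans_mat [simp]: "ctrans (mat c) = mat (cnj c)"
  by (simp add: ctrans_def mat_def vec_eq_iff)

lemma unitary_mat_iff_right_inverse: "unitary_mat U \<longleftrightarrow> U ** ctrans U = mat 1"
  by (simp add: unitary_mat_def matrix_left_right_inverse[of U])

primrec mat_pow :: "complex ^ 'n ^ 'n \<Rightarrow> nat \<Rightarrow> complex ^ 'n ^ 'n" where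
  "mat_pow A 0 = mat 1"
| "mat_pow A (Suc j) = A ** mat_pow A j"

lemma commute_mat_pow:
  assumes "D ** A = A ** D"
  shows "D ** mat_pow A j = mat_pow A j ** D"
proof (induction j)
  case (Suc j)
  have "D ** (A ** mat_pow A j) = A ** (D ** mat_pow A j)"
    by (simp add: matrix_mul_assoc assms)
  then show ?case
    by (simp add: Suc.IH matrix_mul_assoc)
qed simp

lemma perm_mat_comp: "perm_mat p ** perm_mat q = perm_mat (p \<circ> q)"
proof -
  have "(\<Sum>k\<in>UNIV. (if i = p k then 1 else 0) * (if k = j then 1 else 0))
      = (if i = p j then 1 else (0::complex))" for i j
    by (simp add: if_distrib[of "\<lambda>x. _ * x"] cong: if_cong)
  then show ?thesis
    by (simp add: perm_mat_def matrix_matrix_mult_def vec_eq_iff)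
qed

lemma perm_mat_id: "perm_mat id = mat 1"
  by (simp add: perm_mat_def mat_def vec_eq_iff)

lemma mat_pow_perm_mat: "mat_pow (perm_mat p) j = perm_mat (p ^^ j)"
  by (induction j) (simp_all add: perm_mat_comp perm_mat_id[unfolded id_def] comp_def)

lemma unitary_perm_mat:
  assumes "p permutes UNIV"
  shows "unitary_mat (perm_mat p)"
proof -
  have "ctrans (perm_mat p) = perm_mat (inv p)"
    using permutes_inverses[OF assms] by (auto simp: ctrans_def perm_mat_def vec_eq_iff)
  then show ?thesis
    by (simp add: unitary_mat_iff_right_inverse perm_mat_comp permutes_inv_o[OF assms] perm_mat_id)
qed

lemma diag_mat_mult: "diag_mat d ** A = (\<chi> i j. d i * A $ i $ j)"
  by (simp add: diag_mat_def matrix_matrix_mult_def vec_eq_iff if_distrib[of "\<lambda>x. x * _"] cong: if_cong)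

lemma mult_diag_mat: "A ** diag_mat d = (\<chi> i j. A $ i $ j * d j)"
  by (simp add: diag_mat_def matrix_matrix_mult_def vec_eq_iff if_distrib[of "\<lambda>x. _ * x"] cong: if_cong)

lemma diag_mat_commute_perm_mat:
  assumes "\<And>i. d (p i) = d i"
  shows "diag_mat d ** perm_mat p = perm_mat p ** diag_mat d"
  using assms by (auto simp: diag_mat_mult mult_diag_mat perm_mat_def vec_eq_iff)

lemma Urysohn_metric:
  fixes A B :: "'a::metric_space set"
  assumes "closed A" and "closed B" and "A \<inter> B = {}"
  obtains f :: "'a \<Rightarrow> real"
    where "continuous_on UNIV f" and "\<And>x. x \<in> A \<Longrightarrow> f x = 0" and "\<And>x. x \<in> B \<Longrightarrow> f x = 1"
proof -
  have "normal_space (euclidean :: 'a topology)"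
    by (simp add: metrizable_imp_normal_space metrizable_space_euclidean)
  moreover have "closedin euclidean A" "closedin euclidean B" "disjnt A B"
    using assms by (simp_all add: disjnt_def)
  ultimately obtain f :: "'a \<Rightarrow> real"
    where "continuous_map euclidean euclideanreal f" "f ` A \<subseteq> {0}" "f ` B \<subseteq> {1}"
    by (rule Urysohn_lemma_alt)
  then show thesis
    using that by (simp add: image_subset_iff)
qed

lemma sum_lessThan_rotate:
  fixes g :: "nat \<Rightarrow> 'a::cancel_comm_monoid_add"
  assumes "g m = g 0"
  shows "(\<Sum>j<m. g (Suc j)) = (\<Sum>j<m. g j)"
  using sum.lessThan_Suc_shift[of g m] sum.lessThan_Suc[of g m] assms by (simp add: add.commute)

locale finite_order_unitary =
  fixes U :: "complex ^ 'n ^ 'n" and m :: nat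
  assumes unitary: "unitary_mat U"
    and order_pos: "0 < m"
    and pow_order: "mat_pow U m = mat 1"
begin

definition \<omega> :: complex where "\<omega> = cis (2 * pi / m)"

lemma omega_pow: "\<omega> ^ k = cis (2 * pi * k / m)"
  unfolding \<omega>_def Complex.DeMoivre by (simp add: mult.commute)

lemma omega_pow_order: "\<omega> ^ m = 1"
  using order_pos by (simp add: omega_pow)

lemma omega_pow_mult_cnj: "\<omega> ^ k * cnj \<omega> ^ k = 1"
  by (simp add: \<omega>_def cis_cnj cis_mult flip: power_mult_distrib)

lemma omega_pow_inj: "k < m \<Longrightarrow> l < m \<Longrightarrow> \<omega> ^ k = \<omega> ^ l \<Longrightarrow> k = l"
  using Complex.bij_betw_roots_unity[OF order_pos] by (auto simp: bij_betw_def inj_on_def omega_pow)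

definition eigenproj :: "nat \<Rightarrow> complex ^ 'n ^ 'n" where
  "eigenproj k = (1 / m) *\<^sub>m (\<Sum>j<m. cnj \<omega> ^ (j * k) *\<^sub>m mat_pow U j)"

lemma commute_eigenproj:
  assumes "D ** U = U ** D"
  shows "D ** eigenproj k = eigenproj k ** D"
  by (simp add: eigenproj_def matrix_mult_sum_left matrix_mult_sum_right commute_mat_pow[OF assms])

lemma mult_eigenproj: "U ** eigenproj k = \<omega> ^ k *\<^sub>m eigenproj k"
proof -
  define g where "g j = (\<omega> ^ k * cnj \<omega> ^ (j * k)) *\<^sub>m mat_pow U j" for j
  have "g (Suc j) = cnj \<omega> ^ (j * k) *\<^sub>m mat_pow U (Suc j)" for j
    by (simp add: g_def power_add mult.assoc omega_pow_mult_cnj flip: mult.assoc[of "\<omega> ^ k"])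
  then have "U ** eigenproj k = (1 / m) *\<^sub>m (\<Sum>j<m. g (Suc j))"
    by (simp add: eigenproj_def matrix_mult_sum_right)
  also have "(\<Sum>j<m. g (Suc j)) = (\<Sum>j<m. g j)"
  proof (rule sum_lessThan_rotate)
    have "cnj \<omega> ^ (m * k) = 1"
      by (metis complex_cnj_one complex_cnj_power omega_pow_order power_mult power_one)
    then show "g m = g 0"
      by (simp add: g_def pow_order)
  qed
  finally show ?thesis
    by (simp add: eigenproj_def g_def mat_scale_sum_right mult_ac)
qed

lemma sum_eigenproj: "(\<Sum>k<m. eigenproj k) = mat 1"
proof -
  have geometric: "(\<Sum>k<m. (cnj \<omega> ^ j) ^ k) = (if j = 0 then of_nat m else 0)" if "j < m" for j
  proof -
    have "(cnj \<omega> ^ j) ^ m = 1"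
      by (metis complex_cnj_one complex_cnj_power omega_pow_order power_mult power_mult_distrib mult.commute power_one)
    moreover have "cnj \<omega> ^ j \<noteq> 1" if "j \<noteq> 0"
      using omega_pow_inj[of j 0] \<open>j < m\<close> that order_pos
      by (metis complex_cnj_cnj complex_cnj_one complex_cnj_power power_0)
    ultimately show ?thesis
      by (auto simp: sum_gp_strict)
  qed
  have "(\<Sum>k<m. eigenproj k) = (1 / m) *\<^sub>m (\<Sum>k<m. \<Sum>j<m. cnj \<omega> ^ (j * k) *\<^sub>m mat_pow U j)"
    by (simp add: eigenproj_def mat_scale_sum_right)
  also have "\<dots> = (1 / m) *\<^sub>m (\<Sum>j<m. (\<Sum>k<m. (cnj \<omega> ^ j) ^ k) *\<^sub>m mat_pow U j)"
    by (subst sum.swap) (simp add: mat_scale_sum_left power_mult)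
  also have "\<dots> = (1 / m) *\<^sub>m (\<Sum>j<m. if j = 0 then of_nat m *\<^sub>m mat_pow U j else 0)"
    by (intro arg_cong[where f="\<lambda>A. _ *\<^sub>m A"] sum.cong) (simp_all add: geometric)
  also have "\<dots> = mat 1"
    using order_pos by simp
  finally show ?thesis .
qed

lemma eigenproj_mult: "eigenproj k ** U = \<omega> ^ k *\<^sub>m eigenproj k"
  using commute_eigenproj[of U k] by (simp add: mult_eigenproj)

lemma eigenproj_mult_ctrans_neq:
  assumes "k < m" "l < m" "k \<noteq> l"
  shows "eigenproj k ** ctrans (eigenproj l) = 0"
proof (rule mat_scale_fixed_eq_0)
  have "eigenproj k ** ctrans (eigenproj l) = eigenproj k ** (U ** ctrans U) ** ctrans (eigenproj l)"
    using unitary by (simp add: unitary_mat_def)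
  also have "\<dots> = (eigenproj k ** U) ** ctrans (eigenproj l ** U)"
    by (simp add: ctrans_mult matrix_mul_assoc)
  finally show "(\<omega> ^ k * cnj \<omega> ^ l) *\<^sub>m (eigenproj k ** ctrans (eigenproj l))
      = eigenproj k ** ctrans (eigenproj l)"
    by (simp add: eigenproj_mult ctrans_mat_scale mult.commute)
  show "\<omega> ^ k * cnj \<omega> ^ l \<noteq> 1"
  proof
    assume eq_1: "\<omega> ^ k * cnj \<omega> ^ l = 1"
    have "\<omega> ^ l = (\<omega> ^ k * cnj \<omega> ^ l) * \<omega> ^ l"
      by (simp add: eq_1)
    also have "\<dots> = \<omega> ^ k * (\<omega> ^ l * cnj \<omega> ^ l)"
      by (simp only: mult_ac)
    finally have "\<omega> ^ k = \<omega> ^ l"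
      by (simp add: omega_pow_mult_cnj)
    then show False
      using omega_pow_inj assms by blast
  qed
qed

lemma eigenproj_mult_ctrans:
  assumes "k < m" "l < m"
  shows "eigenproj k ** ctrans (eigenproj l) = (if k = l then eigenproj k else 0)"
proof -
  have "eigenproj k = eigenproj k ** ctrans (\<Sum>j<m. eigenproj j)"
    by (simp add: sum_eigenproj)
  also have "\<dots> = (\<Sum>j<m. eigenproj k ** ctrans (eigenproj j))"
    by (simp add: ctrans_sum matrix_mult_sum_right)
  also have "\<dots> = eigenproj k ** ctrans (eigenproj k)"
    using assms by (subst sum.remove[of _ k]) (auto intro!: sum.neutral eigenproj_mult_ctrans_neq)
  finally show ?thesis
    using assms eigenproj_mult_ctrans_neq by auto
qed

definition frac_pow :: "real \<Rightarrow> complex ^ 'n ^ 'n" where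
  "frac_pow t = (\<Sum>k<m. cis (2 * pi * t * k / m) *\<^sub>m eigenproj k)"

lemma frac_pow_0: "frac_pow 0 = mat 1"
  by (simp add: frac_pow_def sum_eigenproj)

lemma frac_pow_1: "frac_pow 1 = U"
proof -
  have "frac_pow 1 = (\<Sum>k<m. U ** eigenproj k)"
    by (simp add: frac_pow_def mult_eigenproj omega_pow)
  also have "\<dots> = U"
    by (simp add: sum_eigenproj flip: matrix_mult_sum_right)
  finally show ?thesis .
qed

lemma unitary_frac_pow: "unitary_mat (frac_pow t)"
proof -
  define c where "c k = cis (2 * pi * t * k / m)" for k :: nat
  have frac_pow_eq: "frac_pow t = (\<Sum>k<m. c k *\<^sub>m eigenproj k)"
    by (simp add: frac_pow_def c_def)
  have "frac_pow t ** ctrans (frac_pow t)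
      = (\<Sum>k<m. (c k *\<^sub>m eigenproj k) ** ctrans (\<Sum>l<m. c l *\<^sub>m eigenproj l))"
    by (simp only: frac_pow_eq matrix_mult_sum_left)
  also have "\<dots> = (\<Sum>k<m. \<Sum>l<m. (c k * cnj (c l)) *\<^sub>m (eigenproj k ** ctrans (eigenproj l)))"
    by (simp add: ctrans_sum ctrans_mat_scale matrix_mult_sum_right mat_scale_sum_right mult.commute)
  also have "\<dots> = (\<Sum>k<m. (c k * cnj (c k)) *\<^sub>m eigenproj k)"
    by (simp add: eigenproj_mult_ctrans if_distrib[of "\<lambda>A. _ *\<^sub>m A"] cong: if_cong)
  also have "\<dots> = mat 1"
    by (simp add: c_def cis_cnj cis_mult sum_eigenproj)
  finally show ?thesis
    by (simp add: unitary_mat_iff_right_inverse)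
qed

lemma commute_frac_pow:
  assumes "D ** U = U ** D"
  shows "D ** frac_pow t = frac_pow t ** D"
  by (simp add: frac_pow_def matrix_mult_sum_left matrix_mult_sum_right commute_eigenproj[OF assms])

lemma continuous_on_frac_pow [continuous_intros]:
  "continuous_on S f \<Longrightarrow> continuous_on S (\<lambda>x. frac_pow (f x))"
  using order_pos unfolding frac_pow_def by (intro continuous_intros) auto

end

theorem lemma2p5:
  fixes \<sigma> :: "'n::finite \<Rightarrow> 'n"
    and A B :: "'a::metric_space set"
    and lam :: "'n \<Rightarrow> 'a \<Rightarrow> complex"
  assumes "\<sigma> permutes (UNIV :: 'n set)"
    and "closed A" and "closed B" and "A \<inter> B = {}" and "A \<noteq> {}" and "B \<noteq> {}"
    and "\<And>i. continuous_on UNIV (lam i)"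
  shows "\<exists>v :: 'a \<Rightarrow> complex ^ 'n ^ 'n.
           continuous_on UNIV v \<and> (\<forall>x. unitary_mat (v x)) \<and>
           (\<forall>x\<in>A. v x = mat 1) \<and>
           (\<forall>x\<in>B. v x = perm_mat \<sigma>) \<and>
           (\<forall>x. (\<forall>i. lam i x = lam (\<sigma> i) x) \<longrightarrow>
                 v x ** diag_mat (\<lambda>i. lam i x) = diag_mat (\<lambda>i. lam i x) ** v x)"
proof -
  have "permutation \<sigma>"
    using assms(1) by (auto simp: permutation_permutes)
  then obtain m where "\<sigma> ^^ m = id" and "0 < m"
    by (rule permutation_is_nilpotent)
  then interpret finite_order_unitary "perm_mat \<sigma>" m
    using assms(1) by unfold_locales (simp_all add: unitary_perm_mat mat_pow_perm_mat perm_mat_id)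
  obtain f :: "'a \<Rightarrow> real"
    where f: "continuous_on UNIV f" "\<And>x. x \<in> A \<Longrightarrow> f x = 0" "\<And>x. x \<in> B \<Longrightarrow> f x = 1"
    using Urysohn_metric[OF assms(2-4)] by blast
  show ?thesis
  proof (intro exI[of _ "\<lambda>x. frac_pow (f x)"] conjI allI ballI impI)
    fix x
    assume "\<forall>i. lam i x = lam (\<sigma> i) x"
    then have "diag_mat (\<lambda>i. lam i x) ** perm_mat \<sigma> = perm_mat \<sigma> ** diag_mat (\<lambda>i. lam i x)"
      by (intro diag_mat_commute_perm_mat) metis
    then show "frac_pow (f x) ** diag_mat (\<lambda>i. lam i x) = diag_mat (\<lambda>i. lam i x) ** frac_pow (f x)"
      by (rule commute_frac_pow[symmetric])
  qed (simp_all add: f continuous_on_frac_pow unitary_frac_pow frac_pow_0 frac_pow_1)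
qed

end
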